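(* Assume $\mathcal{H}$ is symmetric and complete. Then for every $h\in\mathcal{H}$ and $x\in\mathcal{X}$, the conditional regret of the deferral loss is $$\Delta\mathcal{C}_{\mathsf{L}_{\mathrm{def}},\mathcal{H}}(h,x)=\max\{p_{y_{\max}},p_{n+1}\}-p_{\mathsf{h}},$$ where $p_y=p(x,y)$ for $y\in\mathcal{Y}$, $p_{n+1}=\sum_{y\in\mathcal{Y}}p(x,y)(1-c(x,y))$, $y_{\max}=\operatorname{argmax}_{y\in\mathcal{Y}}p_y$, and $p_{\mathsf{h}}=p_{\mathsf{h}(x)}$ (which equals $p_{n+1}$ when $\mathsf{h}(x)=n+1$).
   Context: Learning to defer: $\mathcal{X}$ input space, $\mathcal{Y}=[n]$, $\overline{\mathcal{Y}}=\{1,\dots,n+1\}$; hypotheses $h\colon\mathcal{X}\times\overline{\mathcal{Y}}\to\mathbb{R}$ with $\mathsf{h}(x)=\operatorname{argmax}_{y\in\overline{\mathcal{Y}}}h(x,y)$ (fixed deterministic tie-breaking); cost $c\colon\mathcal{X}\times\mathcal{Y}\to[0,1]$; deferral loss $\mathsf{L}_{\mathrm{def}}(h,x,y)=1_{\mathsf{h}(x)\neq y}1_{\mathsf{h}(x)\in[n]}+c(x,y)1_{\mathsf{h}(x)=n+1}$. A distribution on $\mathcal{X}\times\mathcal{Y}$ is fixed, with $p(x,y)=\mathbb{P}(Y=y\mid X=x)$. $\mathcal{C}_{\mathsf{L}}(h,x)=\mathbb{E}_{y\mid x}[\mathsf{L}(h,x,y)]$ and $\Delta\mathcal{C}_{\mathsf{L},\mathcal{H}}(h,x)=\mathcal{C}_{\mathsf{L}}(h,x)-\inf_{h'\in\mathcal{H}}\mathcal{C}_{\mathsf{L}}(h',x)$.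 $\mathcal{H}$ is symmetric if there is a family $\mathcal{F}$ of functions $\mathcal{X}\to\mathbb{R}$ with $\{[h(x,1),\dots,h(x,n+1)]:h\in\mathcal{H}\}=\{[f_1(x),\dots,f_{n+1}(x)]:f_i\in\mathcal{F}\}$ for all $x$; complete if $\{h(x,y):h\in\mathcal{H}\}=\mathbb{R}$ for all $(x,y)\in\mathcal{X}\times\mathcal{Y}$. *)

theory Defs
  imports Main "HOL-Analysis.Analysis"
begin

text \<open>Labels: \<Y> = {1..n}, extended label set {1..n+1}, where n+1 means "defer".
  Hypotheses are functions h :: 'x \<Rightarrow> nat \<Rightarrow> real (only values on {1..n+1} matter).\<close>

definition hpred :: "nat \<Rightarrow> ('x \<Rightarrow> nat \<Rightarrow> real) \<Rightarrow> 'x \<Rightarrow> nat" where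
  "hpred n h x = (LEAST y. y \<in> {1..n+1} \<and> (\<forall>y'\<in>{1..n+1}. h x y' \<le> h x y))"

definition Ldef :: "nat \<Rightarrow> ('x \<Rightarrow> nat \<Rightarrow> real) \<Rightarrow> ('x \<Rightarrow> nat \<Rightarrow> real) \<Rightarrow> 'x \<Rightarrow> nat \<Rightarrow> real" where
  "Ldef n c h x y =
     (if hpred n h x \<noteq> y \<and> hpred n h x \<in> {1..n} then 1 else 0)
     + c x y * (if hpred n h x = n + 1 then 1 else 0)"

text \<open>Conditional risk, with p x y = P(Y = y | X = x).\<close>
definition cond_risk :: "nat \<Rightarrow> ('x \<Rightarrow> nat \<Rightarrow> real) \<Rightarrow> ('x \<Rightarrow> nat \<Rightarrow> real)
    \<Rightarrow> ('x \<Rightarrow> nat \<Rightarrow> real) \<Rightarrow> 'x \<Rightarrow> real" where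
  "cond_risk n p c h x = (\<Sum>y\<in>{1..n}. p x y * Ldef n c h x y)"

definition cond_regret :: "nat \<Rightarrow> ('x \<Rightarrow> nat \<Rightarrow> real) \<Rightarrow> ('x \<Rightarrow> nat \<Rightarrow> real)
    \<Rightarrow> ('x \<Rightarrow> nat \<Rightarrow> real) set \<Rightarrow> ('x \<Rightarrow> nat \<Rightarrow> real) \<Rightarrow> 'x \<Rightarrow> real" where
  "cond_regret n p c H h x = cond_risk n p c h x - (INF h'\<in>H. cond_risk n p c h' x)"

definition symmetric_hyp :: "nat \<Rightarrow> ('x \<Rightarrow> nat \<Rightarrow> real) set \<Rightarrow> bool" where
  "symmetric_hyp n H \<longleftrightarrow> (\<exists>F :: ('x \<Rightarrow> real) set. \<forall>x.
     {map (\<lambda>y. h x y) [1..<n+2] | h. h \<in> H}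
     = {map (\<lambda>y. f y x) [1..<n+2] | f. \<forall>y. f y \<in> F})"

definition complete_hyp :: "nat \<Rightarrow> ('x \<Rightarrow> nat \<Rightarrow> real) set \<Rightarrow> bool" where
  "complete_hyp n H \<longleftrightarrow> (\<forall>x. \<forall>y\<in>{1..n}. {h x y | h. h \<in> H} = UNIV)"

end

theory Submission
  imports Defs
begin

text \<open>Writing \<open>p\<^sub>k\<close> for the probability that predicting label \<open>k\<close> is correct (with
  \<open>p\<^sub>n\<^sub>+\<^sub>1 = \<Sum>\<^sub>y p(x,y)(1 - c(x,y))\<close> for deferral), the conditional risk of \<open>h\<close> is \<open>1 - p\<^sub>h\<^sub>(\<^sub>x\<^sub>)\<close>.
  By symmetry, completeness at a single label already makes every real value available
  to each coordinate independently, so \<open>\<H>\<close> contains a hypothesis predicting any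
  prescribed label at \<open>x\<close>; hence the best achievable risk is \<open>1 - max\<^sub>k p\<^sub>k\<close>.\<close>

definition extended_prob :: "nat \<Rightarrow> ('x \<Rightarrow> nat \<Rightarrow> real) \<Rightarrow> ('x \<Rightarrow> nat \<Rightarrow> real) \<Rightarrow> 'x \<Rightarrow> nat \<Rightarrow> real"
  where "extended_prob n p c x k =
    (if k = n + 1 then (\<Sum>y\<in>{1..n}. p x y * (1 - c x y)) else p x k)"

lemma hpred_is_maximizer:
  "hpred n h x \<in> {1..n+1} \<and> (\<forall>y\<in>{1..n+1}. h x y \<le> h x (hpred n h x))"
proof -
  have "Max (h x ` {1..n+1}) \<in> h x ` {1..n+1}"
    by (rule Max_in) auto
  then obtain y0 where "y0 \<in> {1..n+1}" "Max (h x ` {1..n+1}) = h x y0"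
    by (rule imageE)
  then have "y0 \<in> {1..n+1} \<and> (\<forall>y\<in>{1..n+1}. h x y \<le> h x y0)"
    using Max_ge[of "h x ` {1..n+1}"] by auto
  then show ?thesis
    unfolding hpred_def by (rule LeastI)
qed

lemma hpred_in_labels: "hpred n h x \<in> {1..n+1}"
  using hpred_is_maximizer[of n h x] by blast

lemma hpred_eqI:
  assumes "t \<in> {1..n+1}" and "\<And>y. y \<in> {1..n+1} \<Longrightarrow> y \<noteq> t \<Longrightarrow> h x y < h x t"
  shows "hpred n h x = t"
  unfolding hpred_def
proof (rule Least_equality)
  show "t \<in> {1..n+1} \<and> (\<forall>y\<in>{1..n+1}. h x y \<le> h x t)"
    using assms by (metis less_eq_real_def order_refl)
next
  fix y assume "y \<in> {1..n+1} \<and> (\<forall>y'\<in>{1..n+1}. h x y' \<le> h x y)"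
  then show "t \<le> y"
    using assms by (metis not_less order_refl)
qed

lemma cond_risk_eq:
  assumes "(\<Sum>y\<in>{1..n}. p x y) = 1"
  shows "cond_risk n p c h x = 1 - extended_prob n p c x (hpred n h x)"
proof (cases "hpred n h x = n + 1")
  case True
  have "cond_risk n p c h x = (\<Sum>y\<in>{1..n}. p x y - p x y * (1 - c x y))"
    unfolding cond_risk_def Ldef_def using True by (simp add: algebra_simps)
  then show ?thesis
    using True assms by (simp add: sum_subtractf extended_prob_def)
next
  case False
  then have k: "hpred n h x \<in> {1..n}"
    using hpred_in_labels[of n h x] by auto
  have "cond_risk n p c h x = (\<Sum>y\<in>{1..n}. p x y - (if y = hpred n h x then p x y else 0))"
    unfolding cond_risk_def Ldef_def using False k by (intro sum.cong) auto
  then show ?thesis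
    using False k assms by (simp add: sum_subtractf extended_prob_def)
qed

lemma symmetric_complete_realizes:
  fixes H :: "('x \<Rightarrow> nat \<Rightarrow> real) set" and x :: 'x and v :: "nat \<Rightarrow> real"
  assumes "symmetric_hyp n H" and "complete_hyp n H" and "n \<ge> 1"
  shows "\<exists>h\<in>H. \<forall>y\<in>{1..n+1}. h x y = v y"
proof -
  obtain F :: "('x \<Rightarrow> real) set" where F:
    "{map (\<lambda>y. h x y) [1..<n+2] | h. h \<in> H} = {map (\<lambda>y. f y x) [1..<n+2] | f. \<forall>y. f y \<in> F}"
    using assms(1) unfolding symmetric_hyp_def by blast
  have F_attains: "\<exists>f\<in>F. f x = r" for r
  proof -
    have "r \<in> {g x 1 | g. g \<in> H}"
      using assms(2,3) unfolding complete_hyp_def by simp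
    then obtain g where g: "g \<in> H" "g x 1 = r"
      by blast
    then obtain f :: "nat \<Rightarrow> 'x \<Rightarrow> real"
      where f: "map (\<lambda>y. g x y) [1..<n+2] = map (\<lambda>y. f y x) [1..<n+2]" "\<forall>y. f y \<in> F"
      using F by blast
    have "1 \<in> set [1..<n+2]"
      by auto
    then have "g x 1 = f 1 x"
      using f(1) unfolding map_eq_conv by blast
    then show ?thesis
      using f(2) g(2) by auto
  qed
  have "\<forall>y. \<exists>f. f \<in> F \<and> f x = v y"
    using F_attains by blast
  then obtain f :: "nat \<Rightarrow> 'x \<Rightarrow> real" where f: "\<forall>y. f y \<in> F \<and> f y x = v y"
    by (rule choice[THEN exE])
  then have "map (\<lambda>y. f y x) [1..<n+2] \<in> {map (\<lambda>y. h x y) [1..<n+2] | h. h \<in> H}"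
    unfolding F by blast
  then obtain h where "h \<in> H" and h: "map (\<lambda>y. h x y) [1..<n+2] = map (\<lambda>y. f y x) [1..<n+2]"
    by auto
  have "set [1..<n+2] = {1..n+1}"
    by auto
  then have "\<forall>y\<in>{1..n+1}. h x y = v y"
    using h f unfolding map_eq_conv by simp
  with \<open>h \<in> H\<close> show ?thesis
    by blast
qed

lemma symmetric_complete_predicts:
  assumes "symmetric_hyp n H" and "complete_hyp n H" and "n \<ge> 1" and "t \<in> {1..n+1}"
  shows "\<exists>h\<in>H. hpred n h x = t"
proof -
  obtain h where "h \<in> H" and h: "\<forall>y\<in>{1..n+1}. h x y = (if y = t then 1 else 0)"
    using symmetric_complete_realizes[OF assms(1-3), where x = x
        and v = "\<lambda>y. if y = t then 1 else 0"]
    by blast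
  have "hpred n h x = t"
    by (rule hpred_eqI) (use assms(4) h in auto)
  with \<open>h \<in> H\<close> show ?thesis by blast
qed

lemma INF_cond_risk_eq:
  assumes "\<And>t. t \<in> {1..n+1} \<Longrightarrow> \<exists>h\<in>H. hpred n h x = t"
    and "(\<Sum>y\<in>{1..n}. p x y) = 1"
  shows "(INF h\<in>H. cond_risk n p c h x) = 1 - Max (extended_prob n p c x ` {1..n+1})"
proof (rule cInf_eq_minimum)
  have "Max (extended_prob n p c x ` {1..n+1}) \<in> extended_prob n p c x ` {1..n+1}"
    by (rule Max_in) auto
  then obtain t where t: "Max (extended_prob n p c x ` {1..n+1}) = extended_prob n p c x t"
    "t \<in> {1..n+1}"
    by (rule imageE)
  then obtain h where "h \<in> H" "hpred n h x = t"
    using assms(1) by blast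
  moreover from this have "cond_risk n p c h x = 1 - Max (extended_prob n p c x ` {1..n+1})"
    using t cond_risk_eq[where p = p and x = x, OF assms(2)] by simp
  ultimately show "1 - Max (extended_prob n p c x ` {1..n+1}) \<in> (\<lambda>h. cond_risk n p c h x) ` H"
    by (metis image_eqI)
next
  fix r assume "r \<in> (\<lambda>h. cond_risk n p c h x) ` H"
  then obtain h where "r = cond_risk n p c h x"
    by blast
  then have "r = 1 - extended_prob n p c x (hpred n h x)"
    using cond_risk_eq[where p = p and x = x, OF assms(2)] by simp
  moreover have "extended_prob n p c x (hpred n h x) \<le> Max (extended_prob n p c x ` {1..n+1})"
    using hpred_in_labels[of n h x] by (intro Max_ge imageI) auto
  ultimately show "1 - Max (extended_prob n p c x ` {1..n+1}) \<le> r"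
    by linarith
qed

theorem lemma8:
  fixes n :: nat and p c :: "'x \<Rightarrow> nat \<Rightarrow> real"
    and H :: "('x \<Rightarrow> nat \<Rightarrow> real) set" and h :: "'x \<Rightarrow> nat \<Rightarrow> real" and x :: 'x
  assumes n_pos: "n \<ge> 1"
    and p_nonneg: "\<And>x y. p x y \<ge> 0"
    and p_sum: "\<And>x. (\<Sum>y\<in>{1..n}. p x y) = 1"
    and c_range: "\<And>x y. 0 \<le> c x y \<and> c x y \<le> 1"
    and sym: "symmetric_hyp n H"
    and compl: "complete_hyp n H"
    and hH: "h \<in> H"
  shows "cond_regret n p c H h x =
    max (Max (p x ` {1..n})) (\<Sum>y\<in>{1..n}. p x y * (1 - c x y))
    - (if hpred n h x = n + 1 then (\<Sum>y\<in>{1..n}. p x y * (1 - c x y)) else p x (hpred n h x))"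
proof -
  have "cond_regret n p c H h x =
      Max (extended_prob n p c x ` {1..n+1}) - extended_prob n p c x (hpred n h x)"
    unfolding cond_regret_def
    using cond_risk_eq[where p = p and x = x, OF p_sum]
      INF_cond_risk_eq[where p = p and x = x,
        OF symmetric_complete_predicts[OF sym compl n_pos] p_sum[of x]]
    by simp
  moreover have "extended_prob n p c x ` {1..n+1} =
      insert (\<Sum>y\<in>{1..n}. p x y * (1 - c x y)) (p x ` {1..n})"
    by (auto simp: extended_prob_def image_iff)
  moreover have "p x ` {1..n} \<noteq> {}"
    using n_pos by simp
  ultimately show ?thesis
    by (simp add: Max_insert max.commute extended_prob_def)
qed

end
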